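(* The sets $$R_{1,0}=\{\lfloor n\varphi\rfloor+n\mid n\in\mathbb N\}=\{2,5,7,10,13,\dots\},\quad R_{1,1}=\{\lfloor n\varphi\rfloor+n-1\mid n\in\mathbb N\}=\{1,4,6,9,12,\dots\},$$ $$R_{2,0}=\{2\lfloor n\varphi\rfloor+n\mid n\in\mathbb N\}=\{3,8,11,16,21,\dots\}$$ form a partition of $\mathbb N$ (they are pairwise disjoint and their union is $\mathbb N$).
   Context: $\mathbb N=\{1,2,\dots\}$ and $\varphi=\frac{1+\sqrt5}{2}$ is the golden ratio. (In general $R_{i,j}$ denotes the range of $n\mapsto F(i+1)\lfloor n\varphi\rfloor+F(i)n-j$, $F$ the Fibonacci numbers with $F(0)=0,F(1)=F(2)=1$.) *)

theory Defs
  imports Complex_Main "HOL-Number_Theory.Fib"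
begin

definition phi :: real where "phi = (1 + sqrt 5) / 2"

definition R :: "nat \<Rightarrow> nat \<Rightarrow> int set" where
  "R i j = {int (fib (i+1)) * \<lfloor>real n * phi\<rfloor> + int (fib i) * int n - int j | n::nat. n \<ge> 1}"

end

theory Submission
  imports Defs "HOL-Computational_Algebra.Primes"
begin

(* Write a(n) = floor(n phi) and b(n) = floor(n phi^2) = a(n) + n. As phi is irrational and
   1/phi + 1/phi^2 = 1, Beatty's theorem says that the ranges A of a and B of b partition the
   positive integers. R_{1,0} is B, and the identities a(a(n)) = a(n) + n - 1 and
   a(b(n)) = 2 a(n) + n, both consequences of phi^2 = phi + 1, give R_{1,1} = a(A) and
   R_{2,0} = a(B). Since a is injective with image A, the sets a(A) and a(B) partition A,
   so B, a(A) and a(B) partition the positive integers. *)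

lemma sqrt_prime_irrational:
  fixes p :: nat
  assumes "prime p"
  shows "sqrt p \<notin> \<rat>"
proof
  assume "sqrt p \<in> \<rat>"
  then obtain m n :: nat where "n \<noteq> 0" "\<bar>sqrt p\<bar> = m / n" "coprime m n"
    by (rule Rats_abs_nat_div_natE)
  then have "real m = sqrt p * n" by (simp add: field_simps)
  then have "real (m\<^sup>2) = real (p * n\<^sup>2)" by (simp add: power_mult_distrib)
  then have sq: "m\<^sup>2 = p * n\<^sup>2" by (simp only: of_nat_eq_iff)
  then have "p dvd m" using assms prime_dvd_power by (metis dvd_triv_left)
  then obtain k where "m = p * k" ..
  with sq have "n\<^sup>2 = p * k\<^sup>2"
    using prime_gt_0_nat[OF assms] by (simp add: power2_eq_square mult.left_commute)
  then have "p dvd n" using assms prime_dvd_power by (metis dvd_triv_left)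
  with \<open>p dvd m\<close> \<open>coprime m n\<close> assms show False
    using coprime_common_divisor not_prime_unit by blast
qed

lemma of_int_mult_irrational_notin_Ints:
  fixes x :: real
  assumes "x \<notin> \<rat>" "n \<noteq> 0"
  shows "of_int n * x \<notin> \<int>"
proof
  assume "of_int n * x \<in> \<int>"
  then obtain m where "of_int n * x = of_int m" by (rule Ints_cases)
  then have "x = of_int m / of_int n" using assms(2) by (simp add: field_simps)
  with assms(1) show False by simp
qed

lemma of_int_divide_irrational_notin_Ints:
  fixes x :: real
  assumes "x \<notin> \<rat>" "n \<noteq> 0"
  shows "of_int n / x \<notin> \<int>"
proof
  assume "of_int n / x \<in> \<int>"
  then obtain m where m: "of_int n / x = of_int m" by (rule Ints_cases)
  with assms have "x \<noteq> 0" "m \<noteq> 0" by auto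
  with m have "x = of_int n / of_int m" by (simp add: field_simps)
  with assms(1) show False by simp
qed

lemma ceiling_add_ceiling_eq:
  fixes x y :: real
  assumes "x + y = of_int m" "x \<notin> \<int>"
  shows "\<lceil>x\<rceil> + \<lceil>y\<rceil> = m + 1"
proof -
  have "y = - x + of_int m" using assms(1) by simp
  then have "\<lceil>y\<rceil> = \<lceil>- x + of_int m\<rceil>" by (rule arg_cong)
  also have "\<dots> = m - \<lfloor>x\<rfloor>" by (simp only: ceiling_add_of_int ceiling_minus)
  finally have "\<lceil>y\<rceil> = m - \<lfloor>x\<rfloor>" .
  moreover have "\<lceil>x\<rceil> = \<lfloor>x\<rfloor> + 1"
    using assms(2) by (metis Ints_of_int ceiling_altdef)
  ultimately show ?thesis by simp
qed

definition beatty :: "real \<Rightarrow> int set" where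
  "beatty \<alpha> = (\<lambda>n. \<lfloor>of_int n * \<alpha>\<rfloor>) ` {1..}"

lemma beatty_subset:
  assumes "\<alpha> \<ge> 1"
  shows "beatty \<alpha> \<subseteq> {1..}"
proof
  fix k assume "k \<in> beatty \<alpha>"
  then obtain n where n: "n \<ge> 1" "k = \<lfloor>of_int n * \<alpha>\<rfloor>" by (auto simp: beatty_def)
  have "1 * 1 \<le> of_int n * \<alpha>" using n(1) assms by (intro mult_mono) simp_all
  with n(2) show "k \<in> {1..}" by simp
qed

(* k = floor(n alpha) iff the index n lies in the interval [k/alpha, (k+1)/alpha). *)
lemma mem_beatty_iff:
  assumes "\<alpha> > 0" "k \<ge> 1"
  shows "k \<in> beatty \<alpha> \<longleftrightarrow> \<lceil>of_int k / \<alpha>\<rceil> < \<lceil>of_int (k + 1) / \<alpha>\<rceil>"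
proof
  assume "k \<in> beatty \<alpha>"
  then obtain n where "n \<ge> 1" "k = \<lfloor>of_int n * \<alpha>\<rfloor>" by (auto simp: beatty_def)
  then have "of_int k / \<alpha> \<le> of_int n" "of_int n < of_int (k + 1) / \<alpha>"
    using assms(1) by (simp_all add: field_simps) linarith+
  then show "\<lceil>of_int k / \<alpha>\<rceil> < \<lceil>of_int (k + 1) / \<alpha>\<rceil>"
    by (meson ceiling_le le_less_trans less_ceiling_iff)
next
  define n where "n = \<lceil>of_int k / \<alpha>\<rceil>"
  assume "\<lceil>of_int k / \<alpha>\<rceil> < \<lceil>of_int (k + 1) / \<alpha>\<rceil>"
  then have "of_int k / \<alpha> \<le> of_int n" "of_int n < of_int (k + 1) / \<alpha>"
    by (simp_all add: n_def less_ceiling_iff)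
  then have "of_int k \<le> of_int n * \<alpha>" "of_int n * \<alpha> < of_int k + 1"
    using assms(1) by (simp_all add: field_simps)
  moreover have "n \<ge> 1" using assms by (simp add: n_def)
  ultimately show "k \<in> beatty \<alpha>" unfolding beatty_def by (auto intro!: image_eqI floor_unique[symmetric])
qed

theorem beatty_partition:
  assumes "\<alpha> > 0" "\<beta> > 0" "1 / \<alpha> + 1 / \<beta> = 1" "\<alpha> \<notin> \<rat>"
  shows "beatty \<alpha> \<inter> beatty \<beta> = {}" "beatty \<alpha> \<union> beatty \<beta> = {1..}"
proof -
  have "0 < 1 / \<alpha>" "0 < 1 / \<beta>" using assms(1,2) by simp_all
  then have "1 / \<alpha> < 1" "1 / \<beta> < 1" using assms(3) by linarith+
  then have gt1: "\<alpha> > 1" "\<beta> > 1" using assms(1,2) by (simp_all add: field_simps)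
  have ceiling_sum: "\<lceil>of_int j / \<alpha>\<rceil> + \<lceil>of_int j / \<beta>\<rceil> = j + 1" if "j \<ge> 1" for j :: int
  proof (rule ceiling_add_ceiling_eq)
    show "of_int j / \<alpha> + of_int j / \<beta> = of_int j"
      using assms(3) by (metis distrib_left mult.right_neutral times_divide_eq_right)
    show "of_int j / \<alpha> \<notin> \<int>" using assms(4) that by (simp add: of_int_divide_irrational_notin_Ints)
  qed
  have step: "\<lceil>of_int k / \<gamma>\<rceil> \<le> \<lceil>of_int (k + 1) / \<gamma>\<rceil> \<and> \<lceil>of_int (k + 1) / \<gamma>\<rceil> \<le> \<lceil>of_int k / \<gamma>\<rceil> + 1"
    if "\<gamma> > 1" for \<gamma> and k :: int
  proof
    show "\<lceil>of_int k / \<gamma>\<rceil> \<le> \<lceil>of_int (k + 1) / \<gamma>\<rceil>"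
      using that by (intro ceiling_mono divide_right_mono) simp_all
    have "of_int (k + 1) / \<gamma> \<le> of_int k / \<gamma> + 1"
      using that by (simp add: add_divide_distrib)
    then show "\<lceil>of_int (k + 1) / \<gamma>\<rceil> \<le> \<lceil>of_int k / \<gamma>\<rceil> + 1"
      by (metis ceiling_add_one ceiling_mono)
  qed
  \<comment> \<open>the ceilings of k/alpha and k/beta each grow by 0 or 1 at k + 1, by 1 in total\<close>
  have exactly_one: "k \<in> beatty \<alpha> \<longleftrightarrow> k \<notin> beatty \<beta>" if "k \<ge> 1" for k
    using ceiling_sum[of k] ceiling_sum[of "k + 1"] step[OF gt1(1), of k] step[OF gt1(2), of k]
      mem_beatty_iff[OF assms(1) that] mem_beatty_iff[OF assms(2) that] that
    by linarith
  have "beatty \<alpha> \<subseteq> {1..}" "beatty \<beta> \<subseteq> {1..}"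
    using gt1 by (simp_all add: beatty_subset)
  with exactly_one show "beatty \<alpha> \<inter> beatty \<beta> = {}" "beatty \<alpha> \<union> beatty \<beta> = {1..}"
    by auto
qed

lemma strict_mono_floor_mult:
  fixes \<alpha> :: real
  assumes "\<alpha> \<ge> 1"
  shows "strict_mono (\<lambda>n::int. \<lfloor>of_int n * \<alpha>\<rfloor>)"
proof (rule strict_monoI)
  fix n m :: int
  assume "n < m"
  then have "of_int n + 1 \<le> (of_int m :: real)" by linarith
  then have "(of_int n + 1) * \<alpha> \<le> of_int m * \<alpha>"
    using assms by (intro mult_right_mono) simp_all
  then have "of_int n * \<alpha> + 1 \<le> of_int m * \<alpha>"
    using assms by (simp add: algebra_simps)
  then show "\<lfloor>of_int n * \<alpha>\<rfloor> < \<lfloor>of_int m * \<alpha>\<rfloor>" by linarith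
qed

lemma image_partition_refine:
  assumes "A \<inter> B = {}" "A \<union> B = U" "inj_on f U" "f ` U = A"
  shows "B \<inter> f ` A = {}" "B \<inter> f ` B = {}" "f ` A \<inter> f ` B = {}" "B \<union> f ` A \<union> f ` B = U"
proof -
  have "f ` A \<union> f ` B = A" using assms(2,4) by (metis image_Un)
  moreover have "f ` A \<inter> f ` B = {}"
    using inj_on_image_Int[OF assms(3)] assms(1,2) by blast
  ultimately show "B \<inter> f ` A = {}" "B \<inter> f ` B = {}" "f ` A \<inter> f ` B = {}" "B \<union> f ` A \<union> f ` B = U"
    using assms(1,2) by blast+
qed

lemma prime_5: "prime (5::nat)"
proof -
  have "{2..<5::nat} = {2, 3, 4}" by auto
  then show ?thesis by (simp add: prime_nat_iff')
qed

lemma phi_irrational: "phi \<notin> \<rat>"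
proof
  assume "phi \<in> \<rat>"
  then have "2 * phi - 1 \<in> \<rat>" by simp
  moreover have "2 * phi - 1 = sqrt (real 5)" by (simp add: phi_def field_simps)
  ultimately show False using sqrt_prime_irrational[OF prime_5] by simp
qed

lemma phi_squared: "phi\<^sup>2 = phi + 1"
  by (simp add: phi_def power2_eq_square algebra_simps)

lemma one_less_phi: "1 < phi" and phi_less_2: "phi < 2"
proof -
  have "1 < sqrt 5" "sqrt 5 < 3" by (simp_all add: real_less_lsqrt real_less_rsqrt)
  then show "1 < phi" "phi < 2" by (simp_all add: phi_def)
qed

lemma inverse_phi_add_inverse_phi_plus_1: "1 / phi + 1 / (phi + 1) = 1"
  using one_less_phi phi_squared by (simp add: field_simps power2_eq_square)

definition lower_wythoff :: "int \<Rightarrow> int" where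
  "lower_wythoff n = \<lfloor>of_int n * phi\<rfloor>"

lemma beatty_phi: "beatty phi = lower_wythoff ` {1..}"
  by (simp add: beatty_def lower_wythoff_def)

lemma beatty_phi_plus_1: "beatty (phi + 1) = (\<lambda>n. lower_wythoff n + n) ` {1..}"
  by (simp add: beatty_def lower_wythoff_def distrib_left)

lemma lower_wythoff_bounds:
  assumes "n \<noteq> 0"
  shows "of_int (lower_wythoff n) < of_int n * phi" "of_int n * phi < of_int (lower_wythoff n) + 1"
proof -
  have "of_int n * phi \<noteq> of_int (lower_wythoff n)"
    using of_int_mult_irrational_notin_Ints[OF phi_irrational assms] Ints_of_int by metis
  then show "of_int (lower_wythoff n) < of_int n * phi"
    unfolding lower_wythoff_def by (metis of_int_floor_le order_le_neq_trans)
  show "of_int n * phi < of_int (lower_wythoff n) + 1"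
    unfolding lower_wythoff_def by linarith
qed

lemma lower_wythoff_lower_wythoff:
  assumes "n \<noteq> 0"
  shows "lower_wythoff (lower_wythoff n) = lower_wythoff n + n - 1"
proof -
  define f where "f = of_int n * phi - of_int (lower_wythoff n)"
  have f: "0 < f" "f < 1" using lower_wythoff_bounds[OF assms] by (simp_all add: f_def)
  have "of_int n * phi * phi = of_int n * phi + of_int n"
    using phi_squared by (simp add: power2_eq_square mult.assoc distrib_left)
  then have "of_int (lower_wythoff n) * phi = of_int (lower_wythoff n + n) - f * (phi - 1)"
    by (simp add: f_def algebra_simps)
  moreover have "0 < f * (phi - 1)" "f * (phi - 1) < 1"
    using f one_less_phi phi_less_2 mult_strict_mono[of f 1 "phi - 1" 1] by simp_all
  ultimately show ?thesis
    unfolding lower_wythoff_def[of "lower_wythoff n"] by (intro floor_unique) linarith+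
qed

lemma lower_wythoff_upper_wythoff:
  assumes "n \<noteq> 0"
  shows "lower_wythoff (lower_wythoff n + n) = 2 * lower_wythoff n + n"
proof -
  define f where "f = of_int n * phi - of_int (lower_wythoff n)"
  have f: "0 < f" "f < 1" using lower_wythoff_bounds[OF assms] by (simp_all add: f_def)
  have "of_int n * phi * phi = of_int n * phi + of_int n"
    using phi_squared by (simp add: power2_eq_square mult.assoc distrib_left)
  then have "of_int (lower_wythoff n + n) * phi = of_int (2 * lower_wythoff n + n) + f * (2 - phi)"
    by (simp add: f_def algebra_simps)
  moreover have "0 < f * (2 - phi)" "f * (2 - phi) < 1"
    using f one_less_phi phi_less_2 mult_strict_mono[of f 1 "2 - phi" 1] by simp_all
  ultimately show ?thesis
    unfolding lower_wythoff_def[of "lower_wythoff n + n"] by (intro floor_unique) linarith+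
qed

lemma R_eq_image:
  "R i j = (\<lambda>n. int (fib (i + 1)) * lower_wythoff n + int (fib i) * n - int j) ` {1..}"
proof (intro set_eqI iffI)
  fix k assume "k \<in> R i j"
  then obtain n :: nat where "n \<ge> 1" "k = int (fib (i + 1)) * \<lfloor>real n * phi\<rfloor> + int (fib i) * int n - int j"
    by (auto simp: R_def)
  then show "k \<in> (\<lambda>n. int (fib (i + 1)) * lower_wythoff n + int (fib i) * n - int j) ` {1..}"
    by (auto simp: lower_wythoff_def intro!: image_eqI[of _ _ "int n"])
next
  fix k assume "k \<in> (\<lambda>n. int (fib (i + 1)) * lower_wythoff n + int (fib i) * n - int j) ` {1..}"
  then obtain n :: int where "n \<ge> 1" "k = int (fib (i + 1)) * lower_wythoff n + int (fib i) * n - int j"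
    by auto
  then show "k \<in> R i j"
    unfolding R_def lower_wythoff_def by (auto intro!: exI[of _ "nat n"])
qed

lemma R_1_0: "R 1 0 = beatty (phi + 1)"
  by (simp add: R_eq_image beatty_phi_plus_1 numeral_eq_Suc)

lemma R_1_1: "R 1 1 = lower_wythoff ` beatty phi"
proof -
  have "R 1 1 = (\<lambda>n. lower_wythoff n + n - 1) ` {1..}"
    by (simp add: R_eq_image numeral_eq_Suc)
  also have "\<dots> = (\<lambda>n. lower_wythoff (lower_wythoff n)) ` {1..}"
    by (rule image_cong) (simp_all add: lower_wythoff_lower_wythoff)
  finally show ?thesis by (simp add: beatty_phi image_image)
qed

lemma R_2_0: "R 2 0 = lower_wythoff ` beatty (phi + 1)"
proof -
  have "R 2 0 = (\<lambda>n. 2 * lower_wythoff n + n) ` {1..}"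
    by (simp add: R_eq_image numeral_eq_Suc)
  also have "\<dots> = (\<lambda>n. lower_wythoff (lower_wythoff n + n)) ` {1..}"
    by (rule image_cong) (simp_all add: lower_wythoff_upper_wythoff)
  finally show ?thesis by (simp add: beatty_phi_plus_1 image_image)
qed

theorem corollary3p3:
  shows "R 1 0 \<inter> R 1 1 = {} \<and> R 1 0 \<inter> R 2 0 = {} \<and> R 1 1 \<inter> R 2 0 = {}
    \<and> R 1 0 \<union> R 1 1 \<union> R 2 0 = {k::int. k \<ge> 1}"
proof -
  have phi_pos: "0 < phi" "0 < phi + 1" using one_less_phi by simp_all
  note wythoff_partition =
    beatty_partition[OF phi_pos inverse_phi_add_inverse_phi_plus_1 phi_irrational]
  have "inj_on lower_wythoff {1..}"
    using strict_mono_floor_mult[of phi] one_less_phi unfolding lower_wythoff_def[abs_def]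
    by (simp add: strict_mono_imp_inj_on)
  from image_partition_refine[OF wythoff_partition this beatty_phi[symmetric]]
  show ?thesis unfolding R_1_0 R_1_1 R_2_0 atLeast_def by blast
qed

end
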